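(* Let $f:\{0,1\}^n\to\{0,1\}^m$ be a fully balanced function and $r=\dim\operatorname{img}(f)$. Consider the procedure: set $C=B=\varnothing$. While $\langle C\cup B\rangle\neq\{0,1\}^m$: choose $\mathbf{y}\in\{0,1\}^m\setminus\langle C\cup B\rangle$ and query $\mathbf{y}$. If $\mathbf{y}\in C(f)$, add $\mathbf{y}$ to $C$. Otherwise, if $B=\varnothing$, add $\mathbf{y}$ to $B$; if $B\neq\varnothing$, go through the elements $\mathbf{s}\in B$ one at a time, querying $\mathbf{y}_{\mathbf{s}}=\mathbf{s}\oplus\mathbf{y}$: at the first $\mathbf{s}$ with $\mathbf{y}_{\mathbf{s}}\in C(f)$, add $\mathbf{y}_{\mathbf{s}}$ to $C$ and stop going through $B$; if $\mathbf{y}_{\mathbf{s}}\notin C(f)$ for all $\mathbf{s}\in B$, add $\mathbf{y}$ and all the $\mathbf{y}_{\mathbf{s}}$ ($\mathbf{s}\in B$) to $B$. Then the procedure terminates, at termination $\#C=m-r$ (so $r$ is determined with certainty, and $C$ is a basis of $C(f)$) and $\#B=2^r-1$, and the total number of oracle queries is at most $2^r(m-r+1)-1$.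
   Context: Strings in $\{0,1\}^k$ are identified with vectors of $\mathbb{F}_2^k$; $\oplus$ is bitwise addition mod 2; $\mathbf{a}\cdot\mathbf{b}=\bigoplus_i a_ib_i$; $\langle X\rangle$ is the linear span of $X$. $f$ is $\mathbf{y}$-balanced if $f(\mathbf{x})\cdot\mathbf{y}=0$ for exactly half of the $\mathbf{x}$ and $=1$ for the other half, and $\mathbf{y}$-constant if $f(\mathbf{x})\cdot\mathbf{y}$ is the same for all $\mathbf{x}$. $f$ is fully balanced if for every $\mathbf{y}$ it is $\mathbf{y}$-balanced or $\mathbf{y}$-constant; then $\operatorname{img}(f)$ is an affine subspace. $C(f)=\{\mathbf{y}: f\text{ is }\mathbf{y}\text{-constant}\}$. A query on $\mathbf{y}$ reports whether $\mathbf{y}\in C(f)$ (one run of the Generalised Phase Kick-Back algorithm with marker $\mathbf{y}$, whose output is $\mathbf{0}$ exactly when $f$ is $\mathbf{y}$-constant, for fully balanced $f$). *)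

theory Defs
  imports Main
begin

text \<open>Bit strings of length k are bool lists of length k (True = 1), viewed as vectors of F_2^k.\<close>

definition vecs :: "nat \<Rightarrow> bool list set" where
  "vecs k = {xs. length xs = k}"

definition vxor :: "bool list \<Rightarrow> bool list \<Rightarrow> bool list" where
  "vxor xs ys = map2 (\<lambda>a b. a \<noteq> b) xs ys"

definition vdot :: "bool list \<Rightarrow> bool list \<Rightarrow> bool" where
  "vdot xs ys = odd (length (filter (\<lambda>(a, b). a \<and> b) (zip xs ys)))"

inductive_set span2 :: "nat \<Rightarrow> bool list set \<Rightarrow> bool list set" for m X where
  zero: "replicate m False \<in> span2 m X"
| add: "x \<in> X \<Longrightarrow> v \<in> span2 m X \<Longrightarrow> vxor x v \<in> span2 m X"

definition lin_indep2 :: "nat \<Rightarrow> bool list set \<Rightarrow> bool" where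
  "lin_indep2 m B = (\<forall>b\<in>B. b \<notin> span2 m (B - {b}))"

definition vdim2 :: "nat \<Rightarrow> bool list set \<Rightarrow> nat" where
  "vdim2 m V = (LEAST k. \<exists>B\<subseteq>V. finite B \<and> card B = k \<and> span2 m B = span2 m V)"

definition affine_dim2 :: "nat \<Rightarrow> bool list set \<Rightarrow> nat" where
  "affine_dim2 m A = vdim2 m {vxor a b | a b. a \<in> A \<and> b \<in> A}"

definition y_balanced :: "nat \<Rightarrow> (bool list \<Rightarrow> bool list) \<Rightarrow> bool list \<Rightarrow> bool" where
  "y_balanced n f y =
     (card {x \<in> vecs n. \<not> vdot (f x) y} = card {x \<in> vecs n. vdot (f x) y})"

definition y_constant :: "nat \<Rightarrow> (bool list \<Rightarrow> bool list) \<Rightarrow> bool list \<Rightarrow> bool" where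
  "y_constant n f y = (\<forall>x\<in>vecs n. \<forall>x'\<in>vecs n. vdot (f x) y = vdot (f x') y)"

definition fully_balanced :: "nat \<Rightarrow> nat \<Rightarrow> (bool list \<Rightarrow> bool list) \<Rightarrow> bool" where
  "fully_balanced n m f = (\<forall>y\<in>vecs m. y_balanced n f y \<or> y_constant n f y)"

definition constant_set :: "nat \<Rightarrow> nat \<Rightarrow> (bool list \<Rightarrow> bool list) \<Rightarrow> bool list set" where
  "constant_set n m f = {y \<in> vecs m. y_constant n f y}"

text \<open>One iteration of the while loop of the procedure. A state is (C, B, number of queries so far);
  Q is the set answered positively by a query (Q = C(f)). Choices of y and of the order in
  which B is traversed are nondeterministic.\<close>
inductive gpk_step :: "nat \<Rightarrow> bool list set \<Rightarrow> bool list set \<times> bool list set \<times> nat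
                        \<Rightarrow> bool list set \<times> bool list set \<times> nat \<Rightarrow> bool" for m Q where
  in_C: "span2 m (C \<union> B) \<noteq> vecs m \<Longrightarrow> y \<in> vecs m - span2 m (C \<union> B) \<Longrightarrow> y \<in> Q
     \<Longrightarrow> gpk_step m Q (C, B, q) (insert y C, B, q + 1)"
| B_empty: "span2 m (C \<union> B) \<noteq> vecs m \<Longrightarrow> y \<in> vecs m - span2 m (C \<union> B) \<Longrightarrow> y \<notin> Q
     \<Longrightarrow> B = {} \<Longrightarrow> gpk_step m Q (C, B, q) (C, {y}, q + 1)"
| found: "span2 m (C \<union> B) \<noteq> vecs m \<Longrightarrow> y \<in> vecs m - span2 m (C \<union> B) \<Longrightarrow> y \<notin> Q
     \<Longrightarrow> B \<noteq> {} \<Longrightarrow> distinct ss \<Longrightarrow> set ss = B \<Longrightarrow> j < length ss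
     \<Longrightarrow> (\<forall>i<j. vxor (ss ! i) y \<notin> Q) \<Longrightarrow> vxor (ss ! j) y \<in> Q
     \<Longrightarrow> gpk_step m Q (C, B, q) (insert (vxor (ss ! j) y) C, B, q + 1 + Suc j)"
| none: "span2 m (C \<union> B) \<noteq> vecs m \<Longrightarrow> y \<in> vecs m - span2 m (C \<union> B) \<Longrightarrow> y \<notin> Q
     \<Longrightarrow> B \<noteq> {} \<Longrightarrow> (\<forall>s\<in>B. vxor s y \<notin> Q)
     \<Longrightarrow> gpk_step m Q (C, B, q) (C, B \<union> insert y ((\<lambda>s. vxor s y) ` B), q + 1 + card B)"

end

theory Submission
  imports Defs
begin

text \<open>C(f) is the orthogonal complement of the direction space D of img f, so by the character-sum
  identity #span D * #C(f) = 2^m it is a subspace of dimension m - r. Every iteration of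
  the loop doubles #span (C \<union> B): a constant marker found enlarges C by a vector of C(f) outside
  span (C \<union> B), and a round without one replaces B \<union> {0} by the subspace it spans together with y.
  Since span (C \<union> B) stays the direct sum of span C and B \<union> {0} and meets C(f) exactly in
  span C, once it is all of F_2^m the set C is a basis of C(f) and #B + 1 = 2^r. A round costs at
  most #B + 1 queries, which gives the bound (#C + 1)(#B + 1) - 1 on the total.\<close>

section \<open>Vectors over F_2\<close>

abbreviation vzero :: "nat \<Rightarrow> bool list" where
  "vzero m \<equiv> replicate m False"

lemma vxor_simps [simp]:
  "vxor [] ys = []" "vxor xs [] = []" "vxor (x # xs) (y # ys) = (x \<noteq> y) # vxor xs ys"
  by (auto simp: vxor_def)

lemma length_vxor [simp]: "length (vxor xs ys) = min (length xs) (length ys)"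
  by (simp add: vxor_def)

lemma vxor_commute: "vxor xs ys = vxor ys xs"
  by (induction xs ys rule: list_induct2') auto

lemma vxor_assoc: "vxor (vxor xs ys) zs = vxor xs (vxor ys zs)"
proof (induction xs arbitrary: ys zs)
  case (Cons x xs)
  then show ?case by (cases ys; cases zs) auto
qed simp

lemma vxor_left_commute: "vxor xs (vxor ys zs) = vxor ys (vxor xs zs)"
  by (simp only: vxor_assoc[symmetric] vxor_commute[of xs ys])

lemmas vxor_ac = vxor_assoc vxor_commute vxor_left_commute

lemma vxor_self [simp]: "vxor xs xs = vzero (length xs)"
  by (induction xs) auto

lemma vxor_zero_left [simp]: "length xs = n \<Longrightarrow> vxor (vzero n) xs = xs"
  by (induction xs arbitrary: n) auto

lemma vxor_zero_right [simp]: "length xs = n \<Longrightarrow> vxor xs (vzero n) = xs"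
  by (metis vxor_commute vxor_zero_left)

lemma vxor_cancel_left [simp]: "length x = length y \<Longrightarrow> vxor x (vxor x y) = y"
  by (metis vxor_assoc vxor_self vxor_zero_left)

lemma vxor_cancel_right [simp]: "length x = length y \<Longrightarrow> vxor (vxor y x) x = y"
  by (metis vxor_assoc vxor_commute vxor_cancel_left)

lemma mem_vecs [simp]: "x \<in> vecs m \<longleftrightarrow> length x = m"
  by (simp add: vecs_def)

lemma finite_vecs: "finite (vecs m)"
  using finite_lists_length_eq[of "UNIV :: bool set" m] by (simp add: vecs_def)

lemma card_vecs: "card (vecs m) = 2 ^ m"
  using card_lists_length_eq[of "UNIV :: bool set" m] by (simp add: vecs_def card_UNIV_bool)

lemma inj_on_vxor: "length y = m \<Longrightarrow> inj_on (vxor y) (vecs m)"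
  by (rule inj_on_inverseI[where g = "vxor y"]) simp

lemma vdot_simps [simp]:
  "vdot [] ys = False" "vdot xs [] = False" "vdot (x # xs) (y # ys) = ((x \<and> y) \<noteq> vdot xs ys)"
  by (auto simp: vdot_def)

lemma vdot_commute: "vdot xs ys = vdot ys xs"
  by (induction xs ys rule: list_induct2') auto

lemma vdot_zero_left [simp]: "vdot (vzero n) ys = False"
proof (induction n arbitrary: ys)
  case (Suc n)
  then show ?case by (cases ys) auto
qed simp

lemma vdot_zero_right [simp]: "vdot ys (vzero n) = False"
  by (metis vdot_commute vdot_zero_left)

lemma vdot_vxor_left: "length a = length b \<Longrightarrow> vdot (vxor a b) y \<longleftrightarrow> vdot a y \<noteq> vdot b y"
proof (induction a arbitrary: b y)
  case (Cons x a)
  then show ?case by (cases b; cases y) auto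
qed simp

lemma vdot_vxor_right: "length a = length b \<Longrightarrow> vdot y (vxor a b) \<longleftrightarrow> vdot y a \<noteq> vdot y b"
  by (metis vdot_commute vdot_vxor_left)

lemma exists_vdot_nonzero:
  "length w = m \<Longrightarrow> w \<noteq> vzero m \<Longrightarrow> \<exists>u. length u = m \<and> vdot w u"
proof (induction w arbitrary: m)
  case (Cons a w)
  then obtain k where k: "m = Suc k" "length w = k" by auto
  show ?case
  proof (cases a)
    case True
    then show ?thesis using k by (intro exI[of _ "True # vzero k"]) simp
  next
    case False
    then obtain u where "length u = k" "vdot w u" using Cons k by auto
    then show ?thesis using False k by (intro exI[of _ "False # u"]) simp
  qed
qed simp

section \<open>Spans and dimension\<close>

definition subspace2 :: "nat \<Rightarrow> bool list set \<Rightarrow> bool" where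
  "subspace2 m W \<longleftrightarrow> W \<subseteq> vecs m \<and> vzero m \<in> W \<and> (\<forall>a\<in>W. \<forall>b\<in>W. vxor a b \<in> W)"

lemma span2_subset_subspace2:
  assumes "subspace2 m W" "X \<subseteq> W"
  shows "span2 m X \<subseteq> W"
proof
  fix v assume "v \<in> span2 m X"
  then show "v \<in> W"
    by (induction rule: span2.induct) (use assms in \<open>auto simp: subspace2_def\<close>)
qed

lemma span2_subset_vecs: "X \<subseteq> vecs m \<Longrightarrow> span2 m X \<subseteq> vecs m"
  by (rule span2_subset_subspace2) (auto simp: subspace2_def)

lemma length_span2:
  assumes "X \<subseteq> vecs m" "v \<in> span2 m X"
  shows "length v = m"
  using span2_subset_vecs[OF assms(1)] assms(2) by auto

lemma span2_base: "X \<subseteq> vecs m \<Longrightarrow> x \<in> X \<Longrightarrow> x \<in> span2 m X"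
  using span2.add[OF _ span2.zero, of x X m] by auto

lemma span2_vxor:
  assumes X: "X \<subseteq> vecs m" and "u \<in> span2 m X" "v \<in> span2 m X"
  shows "vxor u v \<in> span2 m X"
  using assms(2)
proof (induction rule: span2.induct)
  case zero
  then show ?case using span2_subset_vecs[OF X] assms(3) by auto
next
  case (add x w)
  then show ?case by (simp add: vxor_assoc span2.add)
qed

lemma subspace2_span2: "X \<subseteq> vecs m \<Longrightarrow> subspace2 m (span2 m X)"
  by (auto simp: subspace2_def span2_subset_vecs span2_vxor intro: span2.zero)

lemma span2_mono:
  assumes "X \<subseteq> Y"
  shows "span2 m X \<subseteq> span2 m Y"
proof
  fix v assume "v \<in> span2 m X"
  then show "v \<in> span2 m Y"
    by (induction rule: span2.induct) (use assms in \<open>auto intro: span2.intros\<close>)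
qed

lemma span2_subset_span2I: "Y \<subseteq> vecs m \<Longrightarrow> X \<subseteq> span2 m Y \<Longrightarrow> span2 m X \<subseteq> span2 m Y"
  by (rule span2_subset_subspace2[OF subspace2_span2])

lemma span2_insert_absorb:
  "V \<subseteq> vecs m \<Longrightarrow> x \<in> span2 m V \<Longrightarrow> span2 m (insert x V) = span2 m V"
  by (intro equalityI span2_subset_span2I span2_mono) (auto intro: span2_base)

lemma span2_eq_of_subset_span2:
  "Y \<subseteq> vecs m \<Longrightarrow> Y \<subseteq> X \<Longrightarrow> X \<subseteq> span2 m Y \<Longrightarrow> span2 m X = span2 m Y"
  by (intro equalityI span2_subset_span2I span2_mono)

lemma span2_empty: "span2 m {} = {vzero m}"
  using span2_subset_subspace2[of m "{vzero m}" "{}"] span2.zero[of m "{}"]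
  by (auto simp: subspace2_def)

lemma finite_span2: "X \<subseteq> vecs m \<Longrightarrow> finite (span2 m X)"
  by (rule finite_subset[OF span2_subset_vecs finite_vecs])

lemma span2_insert:
  assumes X: "X \<subseteq> vecs m" and y: "length y = m"
  shows "span2 m (insert y X) = span2 m X \<union> vxor y ` span2 m X"
proof
  show "span2 m (insert y X) \<subseteq> span2 m X \<union> vxor y ` span2 m X"
  proof
    fix v assume "v \<in> span2 m (insert y X)"
    then show "v \<in> span2 m X \<union> vxor y ` span2 m X"
    proof (induction rule: span2.induct)
      case zero
      then show ?case by (simp add: span2.zero)
    next
      case (add x v)
      consider "x = y" | "x \<in> X" using add.hyps(1) by blast
      then show ?case
      proof cases
        case 1
        then show ?thesis using add.IH y length_span2[OF X] by force
      next
        case 2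
        from add.IH show ?thesis
        proof
          assume "v \<in> vxor y ` span2 m X"
          then obtain w where w: "w \<in> span2 m X" "v = vxor y w" by blast
          have "vxor x v = vxor y (vxor x w)" unfolding w(2) by (rule vxor_left_commute)
          moreover have "vxor x w \<in> span2 m X" using 2 w(1) by (rule span2.add)
          ultimately show ?thesis by blast
        qed (use 2 in \<open>auto intro: span2.add\<close>)
      qed
    qed
  qed
  show "span2 m X \<union> vxor y ` span2 m X \<subseteq> span2 m (insert y X)"
    using span2_mono[of X "insert y X" m] by (auto intro: span2.add)
qed

lemma vxor_notin_span2:
  assumes X: "X \<subseteq> vecs m" and "s \<in> span2 m X" "length y = m" "y \<notin> span2 m X"
  shows "vxor s y \<notin> span2 m X"
proof
  assume "vxor s y \<in> span2 m X"
  then have "vxor s (vxor s y) \<in> span2 m X" using assms(2) span2_vxor[OF X] by blast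
  then show False using assms length_span2[OF X] by simp
qed

lemma card_span2_insert_le:
  assumes X: "X \<subseteq> vecs m" and y: "length y = m"
  shows "card (span2 m (insert y X)) \<le> 2 * card (span2 m X)"
proof -
  have "card (span2 m (insert y X)) \<le> card (span2 m X) + card (vxor y ` span2 m X)"
    unfolding span2_insert[OF X y] by (rule card_Un_le)
  also have "\<dots> \<le> 2 * card (span2 m X)"
    using card_image_le[OF finite_span2[OF X], of "vxor y"] by simp
  finally show ?thesis .
qed

lemma card_span2_insert:
  assumes X: "X \<subseteq> vecs m" and y: "length y = m" and y_notin: "y \<notin> span2 m X"
  shows "card (span2 m (insert y X)) = 2 * card (span2 m X)"
proof -
  have disjoint: "span2 m X \<inter> vxor y ` span2 m X = {}"
  proof (rule ccontr)
    assume "span2 m X \<inter> vxor y ` span2 m X \<noteq> {}"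
    then obtain s where s: "s \<in> span2 m X" "vxor y s \<in> span2 m X" by auto
    then have "vxor (vxor y s) s \<in> span2 m X" using span2_vxor[OF X] by blast
    moreover have "length s = m" using s span2_subset_vecs[OF X] by auto
    ultimately show False using y y_notin by simp
  qed
  have "card (vxor y ` span2 m X) = card (span2 m X)"
    by (rule card_image[OF inj_on_subset[OF inj_on_vxor[OF y] span2_subset_vecs[OF X]]])
  then show ?thesis
    using card_Un_disjoint[OF finite_span2[OF X] _ disjoint] finite_span2[OF X]
    by (simp add: span2_insert[OF X y])
qed

lemma card_span2_le: "finite X \<Longrightarrow> X \<subseteq> vecs m \<Longrightarrow> card (span2 m X) \<le> 2 ^ card X"
proof (induction X rule: finite_induct)
  case empty
  then show ?case by (simp add: span2_empty)
next
  case (insert x F)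
  then have "card (span2 m (insert x F)) \<le> 2 * card (span2 m F)"
    by (intro card_span2_insert_le) auto
  also have "\<dots> \<le> 2 * 2 ^ card F" using insert by auto
  finally show ?case using insert by simp
qed

lemma exists_basis_subset:
  "finite V \<Longrightarrow> V \<subseteq> vecs m \<Longrightarrow> \<exists>B\<subseteq>V. card (span2 m B) = 2 ^ card B \<and> span2 m B = span2 m V"
proof (induction V rule: finite_induct)
  case empty
  then show ?case by (auto simp: span2_empty)
next
  case (insert x F)
  then obtain B where B: "B \<subseteq> F" "card (span2 m B) = 2 ^ card B" "span2 m B = span2 m F"
    by auto
  have FV: "F \<subseteq> vecs m" and BV: "B \<subseteq> vecs m" and x: "length x = m"
    using insert.prems B(1) by auto
  show ?case
  proof (cases "x \<in> span2 m F")
    case True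
    then show ?thesis using B span2_insert_absorb[OF FV True] by (intro exI[of _ B]) auto
  next
    case False
    have "x \<notin> B" "finite B" using insert.hyps B(1) finite_subset by auto
    then have "card (span2 m (insert x B)) = 2 ^ card (insert x B)"
      using card_span2_insert[OF BV x] False B by simp
    moreover have "span2 m (insert x B) = span2 m (insert x F)"
      using span2_insert[OF BV x] span2_insert[OF FV x] B(3) by simp
    ultimately show ?thesis using B(1) by (intro exI[of _ "insert x B"]) auto
  qed
qed

lemma vdim2_eqI:
  assumes V: "V \<subseteq> vecs m" and card_V: "card (span2 m V) = 2 ^ d"
  shows "vdim2 m V = d"
  unfolding vdim2_def
proof (rule Least_equality)
  have "finite V" using V finite_vecs finite_subset by blast
  then obtain B where B: "B \<subseteq> V" "card (span2 m B) = 2 ^ card B" "span2 m B = span2 m V"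
    using exists_basis_subset[OF \<open>finite V\<close> V] by blast
  then have "card B = d" using card_V by simp
  then show "\<exists>B\<subseteq>V. finite B \<and> card B = d \<and> span2 m B = span2 m V"
    using B \<open>finite V\<close> finite_subset by blast
next
  fix k assume "\<exists>B\<subseteq>V. finite B \<and> card B = k \<and> span2 m B = span2 m V"
  then obtain B where B: "B \<subseteq> V" "finite B" "card B = k" "span2 m B = span2 m V" by auto
  have "card (span2 m B) \<le> 2 ^ card B" using card_span2_le[OF B(2)] B(1) V by blast
  then have "(2::nat) ^ d \<le> 2 ^ k" using B(3,4) card_V by simp
  then show "d \<le> k" by simp
qed

lemma card_span2_eq_power_vdim2:
  assumes V: "V \<subseteq> vecs m"
  shows "card (span2 m V) = 2 ^ vdim2 m V"
proof -
  have "finite V" using V finite_vecs finite_subset by blast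
  then obtain B where "B \<subseteq> V" "card (span2 m B) = 2 ^ card B" "span2 m B = span2 m V"
    using exists_basis_subset[OF _ V] by blast
  then show ?thesis using vdim2_eqI[OF V] by simp
qed

lemma lin_indep2_of_card:
  assumes C: "finite C" "C \<subseteq> vecs m" and card_C: "card (span2 m C) = 2 ^ card C"
  shows "lin_indep2 m C"
  unfolding lin_indep2_def
proof
  fix b assume b: "b \<in> C"
  show "b \<notin> span2 m (C - {b})"
  proof
    assume "b \<in> span2 m (C - {b})"
    moreover have "C - {b} \<subseteq> vecs m" using C by blast
    ultimately have "span2 m (insert b (C - {b})) = span2 m (C - {b})"
      by (rule span2_insert_absorb[rotated])
    then have "span2 m C = span2 m (C - {b})" using b by (simp add: insert_absorb)
    then have "card (span2 m C) \<le> 2 ^ card (C - {b})"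
      using card_span2_le[of "C - {b}" m] C by auto
    also have "\<dots> < 2 ^ card C" using b C card_Diff1_less[of C b] by simp
    finally show False using card_C by simp
  qed
qed

lemma span2_Un:
  assumes X: "X \<subseteq> vecs m" and Y: "Y \<subseteq> vecs m" and v: "v \<in> span2 m (X \<union> Y)"
  shows "\<exists>a\<in>span2 m X. \<exists>b\<in>span2 m Y. v = vxor a b"
proof -
  have "subspace2 m {vxor a b | a b. a \<in> span2 m X \<and> b \<in> span2 m Y}"
    unfolding subspace2_def
  proof (intro conjI ballI)
    fix u v assume "u \<in> {vxor a b | a b. a \<in> span2 m X \<and> b \<in> span2 m Y}"
      "v \<in> {vxor a b | a b. a \<in> span2 m X \<and> b \<in> span2 m Y}"
    then obtain a b a' b' where ab: "a \<in> span2 m X" "b \<in> span2 m Y" "u = vxor a b"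
      and ab': "a' \<in> span2 m X" "b' \<in> span2 m Y" "v = vxor a' b'" by blast
    have "vxor u v = vxor (vxor a a') (vxor b b')"
      unfolding ab(3) ab'(3) by (simp only: vxor_ac)
    then show "vxor u v \<in> {vxor a b | a b. a \<in> span2 m X \<and> b \<in> span2 m Y}"
      using ab ab' span2_vxor[OF X] span2_vxor[OF Y] by blast
  next
    show "vzero m \<in> {vxor a b | a b. a \<in> span2 m X \<and> b \<in> span2 m Y}"
      using span2.zero[of m X] span2.zero[of m Y] by force
  qed (auto simp: length_span2[OF X] length_span2[OF Y])
  moreover have "X \<union> Y \<subseteq> {vxor a b | a b. a \<in> span2 m X \<and> b \<in> span2 m Y}"
  proof
    fix x assume "x \<in> X \<union> Y"
    then have "x = vxor x (vzero m) \<and> x \<in> span2 m X \<or> x = vxor (vzero m) x \<and> x \<in> span2 m Y"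
      using X Y span2_base[OF X] span2_base[OF Y] by auto
    then show "x \<in> {vxor a b | a b. a \<in> span2 m X \<and> b \<in> span2 m Y}"
      using span2.zero[of m X] span2.zero[of m Y] by blast
  qed
  ultimately show ?thesis using v span2_subset_subspace2 by blast
qed

section \<open>Orthogonal complements\<close>

definition perp2 :: "nat \<Rightarrow> bool list set \<Rightarrow> bool list set" where
  "perp2 m W = {y \<in> vecs m. \<forall>w\<in>W. \<not> vdot w y}"

lemma subspace2_perp2: "subspace2 m (perp2 m W)"
  by (auto simp: subspace2_def perp2_def vdot_vxor_right)

lemma perp2_span2:
  assumes X: "X \<subseteq> vecs m"
  shows "perp2 m (span2 m X) = perp2 m X"
proof
  show "perp2 m (span2 m X) \<subseteq> perp2 m X"
    using span2_base[OF X] by (auto simp: perp2_def)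
next
  show "perp2 m X \<subseteq> perp2 m (span2 m X)"
  proof
    fix y assume y: "y \<in> perp2 m X"
    have "\<not> vdot w y" if "w \<in> span2 m X" for w
      using that
    proof (induction rule: span2.induct)
      case (add x v)
      then show ?case
        using y X length_span2[OF X add.hyps(2)] by (auto simp: perp2_def vdot_vxor_left)
    qed simp
    then show "y \<in> perp2 m (span2 m X)" using y by (auto simp: perp2_def)
  qed
qed

definition sign_vdot :: "bool list \<Rightarrow> bool list \<Rightarrow> int" where
  "sign_vdot w y = (if vdot w y then -1 else 1)"

lemma sum_eq_0_by_involution:
  assumes "finite A" and g: "\<And>a. a \<in> A \<Longrightarrow> g a \<in> A" "\<And>a. a \<in> A \<Longrightarrow> g (g a) = a"
    and s: "\<And>a. a \<in> A \<Longrightarrow> s (g a) = - (s a :: int)"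
  shows "sum s A = 0"
proof -
  have "bij_betw g A A"
    by (rule bij_betw_byWitness[where f' = g]) (use g in auto)
  then have "sum s A = sum (s \<circ> g) A" by (simp add: sum.reindex_bij_betw)
  also have "\<dots> = - sum s A" using s by (simp add: sum_negf)
  finally show ?thesis by simp
qed

lemma sum_sign_vdot_vecs:
  assumes w: "length w = m"
  shows "(\<Sum>y\<in>vecs m. sign_vdot w y) = (if w = vzero m then 2 ^ m else 0)"
proof (cases "w = vzero m")
  case True
  then show ?thesis by (simp add: sign_vdot_def card_vecs)
next
  case False
  then obtain u where u: "length u = m" "vdot w u" using exists_vdot_nonzero w by blast
  have "(\<Sum>y\<in>vecs m. sign_vdot w y) = 0"
    by (rule sum_eq_0_by_involution[where g = "vxor u"])
      (use u w in \<open>auto simp: finite_vecs sign_vdot_def vdot_vxor_right\<close>)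
  then show ?thesis using False by simp
qed

lemma sum_sign_vdot_span2:
  assumes X: "X \<subseteq> vecs m" and y: "length y = m"
  shows "(\<Sum>w\<in>span2 m X. sign_vdot w y) = (if y \<in> perp2 m X then int (card (span2 m X)) else 0)"
proof (cases "y \<in> perp2 m X")
  case True
  then have "\<forall>w\<in>span2 m X. \<not> vdot w y" using perp2_span2[OF X] by (auto simp: perp2_def)
  then show ?thesis using True by (simp add: sign_vdot_def)
next
  case False
  then obtain w0 where w0: "w0 \<in> span2 m X" "vdot w0 y"
    using y perp2_span2[OF X] by (auto simp: perp2_def)
  have "(\<Sum>w\<in>span2 m X. sign_vdot w y) = 0"
  proof (rule sum_eq_0_by_involution[where g = "vxor w0"])
    fix w assume w: "w \<in> span2 m X"
    then show "vxor w0 w \<in> span2 m X" using w0 span2_vxor[OF X] by blast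
    have "length w = m" "length w0 = m" using w w0 length_span2[OF X] by auto
    then show "vxor w0 (vxor w0 w) = w" "sign_vdot (vxor w0 w) y = - sign_vdot w y"
      using w0 by (auto simp: sign_vdot_def vdot_vxor_left)
  qed (rule finite_span2[OF X])
  then show ?thesis using False by simp
qed

text \<open>Double counting of the character sum over span X \<times> F_2^m: summing over y first leaves only
  w = 0, summing over w first leaves only the y orthogonal to X.\<close>
theorem card_span2_mult_card_perp2:
  assumes X: "X \<subseteq> vecs m"
  shows "card (span2 m X) * card (perp2 m X) = 2 ^ m"
proof -
  have "int (2 ^ m) = (\<Sum>w\<in>span2 m X. if w = vzero m then 2 ^ m else 0)"
    using finite_span2[OF X] span2.zero[of m X] by (simp add: sum.delta)
  also have "\<dots> = (\<Sum>w\<in>span2 m X. \<Sum>y\<in>vecs m. sign_vdot w y)"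
    by (rule sum.cong) (simp_all add: sum_sign_vdot_vecs length_span2[OF X])
  also have "\<dots> = (\<Sum>y\<in>vecs m. \<Sum>w\<in>span2 m X. sign_vdot w y)"
    by (rule sum.swap)
  also have "\<dots> = (\<Sum>y\<in>vecs m. if y \<in> perp2 m X then int (card (span2 m X)) else 0)"
    by (rule sum.cong) (simp_all add: sum_sign_vdot_span2[OF X])
  also have "\<dots> = (\<Sum>y\<in>vecs m \<inter> perp2 m X. int (card (span2 m X)))"
    by (rule sum.inter_restrict[symmetric, OF finite_vecs])
  also have "\<dots> = (\<Sum>y\<in>perp2 m X. int (card (span2 m X)))"
    by (rule sum.cong) (auto simp: perp2_def)
  also have "\<dots> = int (card (span2 m X) * card (perp2 m X))"
    by simp
  finally show ?thesis by linarith
qed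

lemma constant_set_eq_perp2:
  assumes f_range: "\<forall>x\<in>vecs n. f x \<in> vecs m"
  shows "constant_set n m f = perp2 m {vxor a b | a b. a \<in> f ` vecs n \<and> b \<in> f ` vecs n}"
proof -
  have "y_constant n f y \<longleftrightarrow> (\<forall>w\<in>{vxor a b | a b. a \<in> f ` vecs n \<and> b \<in> f ` vecs n}. \<not> vdot w y)"
    for y
  proof -
    have "vdot (vxor (f x) (f x')) y \<longleftrightarrow> vdot (f x) y \<noteq> vdot (f x') y"
      if "x \<in> vecs n" "x' \<in> vecs n" for x x'
      using that f_range by (simp add: vdot_vxor_left)
    then show ?thesis unfolding y_constant_def by blast
  qed
  then show ?thesis unfolding constant_set_def perp2_def by blast
qed

section \<open>The procedure\<close>

lemma inter_span2_insert_mem: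
  assumes Q: "subspace2 m Q" and S: "S \<subseteq> vecs m" and C: "C \<subseteq> vecs m"
    and y: "y \<in> Q" and QS: "Q \<inter> span2 m S = span2 m C"
  shows "Q \<inter> span2 m (insert y S) = span2 m (insert y C)"
proof -
  have yv: "length y = m" and Q_vxor: "\<And>a b. a \<in> Q \<Longrightarrow> b \<in> Q \<Longrightarrow> vxor a b \<in> Q"
    using Q y by (auto simp: subspace2_def)
  have "vxor y s \<in> Q \<longleftrightarrow> s \<in> Q" if "s \<in> span2 m S" for s
    using Q_vxor[OF y, of s] Q_vxor[OF y, of "vxor y s"] y yv length_span2[OF S that] by auto
  then show ?thesis
    using QS unfolding span2_insert[OF S yv] span2_insert[OF C yv] by blast
qed

lemma inter_span2_insert_not_mem:
  assumes S: "S \<subseteq> vecs m" and y: "length y = m" and "\<forall>s\<in>span2 m S. vxor y s \<notin> Q"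
  shows "Q \<inter> span2 m (insert y S) = Q \<inter> span2 m S"
  using assms unfolding span2_insert[OF S y] by blast

lemma span2_insert_translates:
  assumes BV: "B \<subseteq> vecs m" and span_B: "span2 m B = insert (vzero m) B"
    and zero_notin: "vzero m \<notin> B" and yv: "length y = m" and y_notin: "y \<notin> span2 m B"
  defines "B' \<equiv> B \<union> insert y ((\<lambda>s. vxor s y) ` B)"
  shows "span2 m (insert y B) = insert (vzero m) B'" and "span2 m B' = insert (vzero m) B'"
    and "vzero m \<notin> B'" and "card B' + 1 = 2 * (card B + 1)"
proof -
  show span_yB: "span2 m (insert y B) = insert (vzero m) B'"
    unfolding span2_insert[OF BV yv] span_B B'_def using yv by (auto simp: vxor_commute)
  then show "span2 m B' = insert (vzero m) B'"
    using span2_eq_of_subset_span2[of "insert y B" m B'] BV yv unfolding B'_def by auto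
  have "vzero m \<notin> (\<lambda>s. vxor s y) ` B"
  proof
    assume "vzero m \<in> (\<lambda>s. vxor s y) ` B"
    then obtain s where "s \<in> B" "vzero m = vxor s y" by (metis imageE)
    then show False
      using vxor_notin_span2[OF BV _ yv y_notin] span2.zero[of m B] span2_base[OF BV] by metis
  qed
  moreover have "y \<noteq> vzero m" using span2.zero[of m B] y_notin by blast
  ultimately show zero_notin': "vzero m \<notin> B'" using zero_notin unfolding B'_def by blast
  have "finite B" using BV finite_vecs finite_subset by blast
  then have "card B' + 1 = card (span2 m (insert y B))"
    using span_yB zero_notin' unfolding B'_def by simp
  also have "\<dots> = 2 * (card B + 1)"
    using card_span2_insert[OF BV yv y_notin] span_B zero_notin \<open>finite B\<close> by simp
  finally show "card B' + 1 = 2 * (card B + 1)" .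
qed

lemma vxor_span2_Un_notin_subspace2:
  assumes Q: "subspace2 m Q" and CV: "C \<subseteq> vecs m" and BV: "B \<subseteq> vecs m"
    and CQ: "span2 m C \<subseteq> Q" and span_B: "span2 m B = insert (vzero m) B"
    and yv: "length y = m" and y: "y \<notin> Q" and sy: "\<forall>s\<in>B. vxor s y \<notin> Q"
    and s: "s \<in> span2 m (C \<union> B)"
  shows "vxor y s \<notin> Q"
proof
  assume ys: "vxor y s \<in> Q"
  obtain a b where ab: "a \<in> span2 m C" "b \<in> span2 m B" "s = vxor a b"
    using span2_Un[OF CV BV s] by blast
  have "length a = m" "length b = m" using ab length_span2 CV BV by auto
  then have "vxor a (vxor y s) = vxor y b" unfolding ab(3) by (subst vxor_left_commute) simp
  moreover have "vxor a (vxor y s) \<in> Q" using Q ys CQ ab(1) by (auto simp: subspace2_def)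
  ultimately have "vxor y b \<in> Q" by simp
  then show False using ab(2) span_B y sy yv by (auto simp: vxor_commute)
qed

text \<open>The invariant of the procedure: C is an independent subset of Q, B \<union> {0} is a subspace,
  span (C \<union> B) is the direct sum of span C and B \<union> {0}, it meets Q only in span C,
  and the query count stays within (#C + 1)(#B + 1) - 1.\<close>
fun gpk_inv :: "nat \<Rightarrow> bool list set \<Rightarrow> bool list set \<times> bool list set \<times> nat \<Rightarrow> bool" where
  "gpk_inv m Q (C, B, q) \<longleftrightarrow>
     C \<subseteq> Q \<and> B \<subseteq> vecs m \<and> span2 m B = insert (vzero m) B \<and> vzero m \<notin> B
     \<and> card (span2 m C) = 2 ^ card C \<and> card (span2 m (C \<union> B)) = 2 ^ card C * (card B + 1)
     \<and> Q \<inter> span2 m (C \<union> B) = span2 m C \<and> q + 1 \<le> (card C + 1) * (card B + 1)"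

fun gpk_span_card :: "nat \<Rightarrow> bool list set \<times> bool list set \<times> nat \<Rightarrow> nat" where
  "gpk_span_card m (C, B, q) = card (span2 m (C \<union> B))"

lemma gpk_inv_init: "subspace2 m Q \<Longrightarrow> gpk_inv m Q ({}, {}, 0)"
  by (auto simp: span2_empty subspace2_def)

lemma gpk_inv_insert_C:
  assumes Q: "subspace2 m Q" and inv: "gpk_inv m Q (C, B, q)" and y: "y \<in> Q"
    and y_notin: "y \<notin> span2 m (C \<union> B)" and q': "q' \<le> q + card B + 1"
  shows "gpk_inv m Q (insert y C, B, q')
    \<and> card (span2 m (insert y C \<union> B)) = 2 * card (span2 m (C \<union> B))"
proof -
  have QV: "Q \<subseteq> vecs m" using Q by (simp add: subspace2_def)
  have CV: "C \<subseteq> vecs m" and CBV: "C \<union> B \<subseteq> vecs m" and yv: "length y = m"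
    using inv y QV by auto
  have "finite C" using CV finite_vecs finite_subset by blast
  moreover have "y \<notin> C" using y_notin span2_base[OF CBV] by blast
  ultimately have card_C: "card (insert y C) = card C + 1" by simp
  have "y \<notin> span2 m C" using y_notin span2_mono[of C "C \<union> B" m] by blast
  then have span_C: "card (span2 m (insert y C)) = 2 * card (span2 m C)"
    by (rule card_span2_insert[OF CV yv])
  have span_CB: "card (span2 m (insert y C \<union> B)) = 2 * card (span2 m (C \<union> B))"
    using card_span2_insert[OF CBV yv y_notin] by simp
  have "Q \<inter> span2 m (insert y C \<union> B) = span2 m (insert y C)"
    using inter_span2_insert_mem[OF Q CBV CV y] inv by simp
  moreover have "q' + 1 \<le> (card (insert y C) + 1) * (card B + 1)"
    using inv q' card_C by simp
  ultimately show ?thesis using inv y card_C span_C span_CB by simp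
qed

lemma gpk_inv_extend_B:
  assumes Q: "subspace2 m Q" and inv: "gpk_inv m Q (C, B, q)" and yv: "length y = m"
    and y_notin: "y \<notin> span2 m (C \<union> B)" and y: "y \<notin> Q" and sy: "\<forall>s\<in>B. vxor s y \<notin> Q"
  defines "B' \<equiv> B \<union> insert y ((\<lambda>s. vxor s y) ` B)"
  shows "gpk_inv m Q (C, B', q + 1 + card B)
    \<and> card (span2 m (C \<union> B')) = 2 * card (span2 m (C \<union> B))"
proof -
  have QV: "Q \<subseteq> vecs m" using Q by (simp add: subspace2_def)
  have CV: "C \<subseteq> vecs m" and BV: "B \<subseteq> vecs m" and CBV: "C \<union> B \<subseteq> vecs m"
    and span_B: "span2 m B = insert (vzero m) B" and zero_notin: "vzero m \<notin> B"
    and QC: "Q \<inter> span2 m (C \<union> B) = span2 m C"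
    using inv QV by auto
  have "y \<notin> span2 m B" using y_notin span2_mono[of B "C \<union> B" m] by blast
  note B' = span2_insert_translates[OF BV span_B zero_notin yv this, folded B'_def]
  have span_CB': "span2 m (C \<union> B') = span2 m (insert y (C \<union> B))"
  proof (rule span2_eq_of_subset_span2)
    have yCBV: "insert y (C \<union> B) \<subseteq> vecs m" using CBV yv by simp
    have "B' \<subseteq> span2 m (insert y (C \<union> B))"
      using B'(1) span2_mono[of "insert y B" "insert y (C \<union> B)" m] by blast
    then show "C \<union> B' \<subseteq> span2 m (insert y (C \<union> B))"
      using span2_base[OF yCBV] by blast
  qed (use CBV yv in \<open>auto simp: B'_def\<close>)
  have card_CB': "card (span2 m (C \<union> B')) = 2 * card (span2 m (C \<union> B))"
    unfolding span_CB' by (rule card_span2_insert[OF CBV yv y_notin])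
  have "\<forall>s\<in>span2 m (C \<union> B). vxor y s \<notin> Q"
    using vxor_span2_Un_notin_subspace2[OF Q CV BV _ span_B yv y sy] QC by blast
  then have "Q \<inter> span2 m (C \<union> B') = span2 m C"
    using inter_span2_insert_not_mem[OF CBV yv] QC unfolding span_CB' by simp
  moreover have "q + 1 + card B + 1 \<le> (card C + 1) * (card B' + 1)"
    using inv B'(4) by (simp add: algebra_simps)
  ultimately show ?thesis
    using inv B' card_CB' BV yv unfolding B'_def by auto
qed

lemma gpk_step_inv:
  assumes Q: "subspace2 m Q" and inv: "gpk_inv m Q s" and step: "gpk_step m Q s s'"
  shows "gpk_inv m Q s' \<and> gpk_span_card m s' = 2 * gpk_span_card m s"
  using step
proof cases
  case (in_C C B y q)
  have "gpk_inv m Q (C, B, q)" using inv unfolding in_C(1) .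
  from gpk_inv_insert_C[OF Q this in_C(5), of "q + 1"] show ?thesis
    using in_C(1,2,4) by (simp del: gpk_inv.simps)
next
  case (B_empty C B y q)
  have "gpk_inv m Q (C, B, q)" using inv unfolding B_empty(1) .
  from gpk_inv_extend_B[OF Q this] show ?thesis
    using B_empty(1,2,4-6) by (simp del: gpk_inv.simps)
next
  case (found C B y ss j q)
  have inv': "gpk_inv m Q (C, B, q)" using inv unfolding found(1) .
  then have CBV: "C \<union> B \<subseteq> vecs m" using Q by (auto simp: subspace2_def)
  have "ss ! j \<in> span2 m (C \<union> B)" using found(8,9) span2_base[OF CBV] by auto
  then have y': "vxor (ss ! j) y \<notin> span2 m (C \<union> B)"
    using vxor_notin_span2[OF CBV] found(4) by simp
  have q': "q + 1 + Suc j \<le> q + card B + 1"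
    using found(7,8,9) distinct_card[of ss] by simp
  show ?thesis
    using gpk_inv_insert_C[OF Q inv' found(11) y' q'] found(1,2) by (simp del: gpk_inv.simps)
next
  case (none C B y q)
  have "gpk_inv m Q (C, B, q)" using inv unfolding none(1) .
  from gpk_inv_extend_B[OF Q this] show ?thesis
    using none(1,2,4,5,7) by (simp del: gpk_inv.simps)
qed

lemma gpk_inv_reachable:
  assumes Q: "subspace2 m Q" and "(gpk_step m Q)\<^sup>*\<^sup>* ({}, {}, 0) s"
  shows "gpk_inv m Q s"
  using assms(2) by induction (use gpk_inv_init[OF Q] gpk_step_inv[OF Q] in blast)+

lemma gpk_span_card_le:
  assumes Q: "subspace2 m Q" and inv: "gpk_inv m Q s"
  shows "gpk_span_card m s \<le> 2 ^ m"
proof (cases s)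
  case (fields C B q)
  then have "span2 m (C \<union> B) \<subseteq> vecs m"
    using inv Q by (intro span2_subset_vecs) (auto simp: subspace2_def)
  then show ?thesis using fields card_mono[OF finite_vecs] by (fastforce simp: card_vecs)
qed

text \<open>Every step doubles #span (C \<union> B), which can never exceed 2^m.\<close>
lemma gpk_no_infinite_run:
  assumes Q: "subspace2 m Q"
  shows "\<not> (\<exists>g. g 0 = ({}, {}, 0) \<and> (\<forall>i. gpk_step m Q (g i) (g (Suc i))))"
proof
  assume "\<exists>g. g 0 = ({}, {}, 0) \<and> (\<forall>i. gpk_step m Q (g i) (g (Suc i)))"
  then obtain g where g0: "g 0 = ({}, {}, 0)" and steps: "\<And>i. gpk_step m Q (g i) (g (Suc i))"
    by blast
  have run: "gpk_inv m Q (g i) \<and> gpk_span_card m (g i) = 2 ^ i" for i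
  proof (induction i)
    case 0
    then show ?case using g0 gpk_inv_init[OF Q] by (simp add: span2_empty)
  next
    case (Suc i)
    then show ?case using gpk_step_inv[OF Q _ steps[of i]] by simp
  qed
  then have "(2::nat) ^ Suc m \<le> 2 ^ m" using gpk_span_card_le[OF Q] by metis
  then show False by simp
qed

lemma gpk_progress:
  assumes Q: "subspace2 m Q" and inv: "gpk_inv m Q (C, B, q)" and ne: "span2 m (C \<union> B) \<noteq> vecs m"
  shows "\<exists>s'. gpk_step m Q (C, B, q) s'"
proof -
  have "span2 m (C \<union> B) \<subseteq> vecs m"
    using inv Q by (intro span2_subset_vecs) (auto simp: subspace2_def)
  then obtain y where y: "y \<in> vecs m - span2 m (C \<union> B)" using ne by blast
  have "finite B" using inv finite_vecs finite_subset by auto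
  then obtain ss where ss: "distinct ss" "set ss = B" using finite_distinct_list by blast
  consider "y \<in> Q" | "y \<notin> Q" "B = {}" | "y \<notin> Q" "B \<noteq> {}" "\<exists>i<length ss. vxor (ss ! i) y \<in> Q"
    | "y \<notin> Q" "B \<noteq> {}" "\<forall>s\<in>B. vxor s y \<notin> Q"
    using ss(2) by (metis in_set_conv_nth)
  then show ?thesis
  proof cases
    case 3
    define j where "j = (LEAST i. i < length ss \<and> vxor (ss ! i) y \<in> Q)"
    have j: "j < length ss" "vxor (ss ! j) y \<in> Q"
      using LeastI_ex[OF 3(3)] unfolding j_def by auto
    have "\<forall>i<j. vxor (ss ! i) y \<notin> Q"
      using not_less_Least j(1) unfolding j_def by fastforce
    then show ?thesis using gpk_step.found[OF ne y 3(1,2) ss j(1) _ j(2)] by blast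
  qed (use gpk_step.intros(1,2,4)[OF ne y] in blast)+
qed

lemma gpk_terminal_state:
  assumes Q: "subspace2 m Q" and card_Q: "card Q * 2 ^ r = 2 ^ m"
    and inv: "gpk_inv m Q (C, B, q)" and full: "span2 m (C \<union> B) = vecs m"
  shows "card C = m - r \<and> C \<subseteq> Q \<and> lin_indep2 m C \<and> span2 m C = Q
    \<and> card B = 2 ^ r - 1 \<and> q \<le> 2 ^ r * (m - r + 1) - 1"
proof -
  have QV: "Q \<subseteq> vecs m" using Q by (simp add: subspace2_def)
  have CQ: "C \<subseteq> Q" and card_C: "card (span2 m C) = 2 ^ card C" using inv by simp_all
  have span_C: "span2 m C = Q" using inv full QV by auto
  have "2 ^ card C * (card B + 1) = (2::nat) ^ m" using inv full card_vecs by simp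
  also have "\<dots> = 2 ^ card C * 2 ^ r" using card_Q span_C card_C by simp
  finally have card_B: "card B + 1 = 2 ^ r" by (simp only: mult_cancel1) simp
  have "(2::nat) ^ (card C + r) = 2 ^ m" using card_Q span_C card_C by (simp add: power_add)
  then have card_C_r: "card C + r = m" by simp
  have "q + 1 \<le> (card C + 1) * (card B + 1)" using inv by simp
  also have "\<dots> = 2 ^ r * (m - r + 1)"
    using card_B card_C_r by (metis add_diff_cancel_right' mult.commute)
  finally have "q + 1 \<le> 2 ^ r * (m - r + 1)" .
  moreover have "lin_indep2 m C"
    using lin_indep2_of_card[OF _ _ card_C] CQ QV finite_subset[OF _ finite_vecs] by blast
  ultimately show ?thesis using CQ span_C card_B card_C_r by auto
qed

theorem mainTheorem10:
  fixes n m :: nat and f :: "bool list \<Rightarrow> bool list"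
  assumes f_range: "\<forall>x\<in>vecs n. f x \<in> vecs m"
    and fb: "fully_balanced n m f"
  defines "r \<equiv> affine_dim2 m (f ` vecs n)"
    and "Q \<equiv> constant_set n m f"
  shows "\<not> (\<exists>g. g 0 = ({}, {}, 0) \<and> (\<forall>i. gpk_step m Q (g i) (g (Suc i))))
    \<and> (\<forall>C B q. (gpk_step m Q)\<^sup>*\<^sup>* ({}, {}, 0) (C, B, q) \<and> span2 m (C \<union> B) \<noteq> vecs m
          \<longrightarrow> (\<exists>s'. gpk_step m Q (C, B, q) s'))
    \<and> (\<forall>C B q. (gpk_step m Q)\<^sup>*\<^sup>* ({}, {}, 0) (C, B, q) \<and> span2 m (C \<union> B) = vecs m
          \<longrightarrow> card C = m - r \<and> C \<subseteq> Q \<and> lin_indep2 m C \<and> span2 m C = Q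
              \<and> card B = 2 ^ r - 1 \<and> q \<le> 2 ^ r * (m - r + 1) - 1)"
proof -
  define D where "D = {vxor a b | a b. a \<in> f ` vecs n \<and> b \<in> f ` vecs n}"
  have DV: "D \<subseteq> vecs m" using f_range unfolding D_def by auto
  have r: "r = vdim2 m D" unfolding r_def affine_dim2_def D_def ..
  have Q_perp: "Q = perp2 m D" unfolding Q_def D_def by (rule constant_set_eq_perp2[OF f_range])
  have Q: "subspace2 m Q" unfolding Q_perp by (rule subspace2_perp2)
  have card_Q: "card Q * 2 ^ r = 2 ^ m"
    using card_span2_mult_card_perp2[OF DV] card_span2_eq_power_vdim2[OF DV]
    unfolding Q_perp r by (simp add: mult.commute)
  note reachable_inv = gpk_inv_reachable[OF Q, of "(C, B, q)" for C B q]
  show ?thesis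
    by (intro conjI[OF gpk_no_infinite_run[OF Q] conjI] allI impI; elim conjE)
      (fact gpk_progress[OF Q reachable_inv] gpk_terminal_state[OF Q card_Q reachable_inv])+
qed

end
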